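(* Let $p+q=3$. The Hurwitz algebra $(\mathcal{G}(p,q),\bullet,N)$ is classified by the signature as follows. - It is isomorphic to the octonions $\mathbb{O}$ if $(p,q)=(3,0)$. - It is isomorphic to the split-octonions $\mathbb{O}_s$ if $(p,q)\in\{(2,1),(1,2),(0,3)\}$.
   Context: Let $p,q\ge0$ with $p+q=3$. $\mathcal{G}(p,q)$ is the real Clifford (geometric) algebra generated by an orthonormal basis $e_1,e_2,e_3$ with $e_i^2=\lambda_i\in\{\pm1\}$ (exactly $p$ of them $+1$) and $e_ie_j=-e_je_i$ for $i\neq j$. $\langle x\rangle_k$ is the grade-$k$ part. We write $x_+=\langle x\rangle_0+\langle x\rangle_2$ and $x_-=\langle x\rangle_1+\langle x\rangle_3$. Clifford conjugation $\tilde x$ multiplies grades $0,1,2,3$ by $+1,-1,-1,+1$. Full grade inversion is $x^*=2\langle x\rangle_0-x$. The product is $x\bullet y = x_+y_+ + \widetilde{y_-}x_- + y_-x_+ + x_-\widetilde{y_+}$. The quadratic form $N$ is defined by $x\bullet x^*=N(x)1$, where $x\bullet x^*$ is a real scalar. $(\mathcal{G}(p,q),\bullet,N)$ is a unital 8-dimensional algebra with nondegenerate multiplicative quadratic form $N$, i.e. a Hurwitz algebra. Hurwitz algebras are unital real algebras with a nondegenerate quadratic form $n$ satisfying $n(xy)=n(x)n(y)$; the 8-dimensional ones are $\mathbb{O}$ (octonions, the division case) and $\mathbb{O}_s$ (split-octonions). *)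

theory Defs
  imports "HOL-Analysis.Analysis"
begin

text \<open>Basis blades e_A, A a subset of {e1,e2,e3}, encoded as bool triples
  (membership of e1, e2, e3).  Multivectors are real vectors indexed by blades.\<close>

type_synonym blade = "bool \<times> bool \<times> bool"
type_synonym mv = "real ^ blade"

fun bmem :: "blade \<Rightarrow> nat \<Rightarrow> bool" where
  "bmem (a, b, c) i = (if i = 0 then a else if i = 1 then b else c)"

fun bxor :: "blade \<Rightarrow> blade \<Rightarrow> blade" where
  "bxor (a, b, c) (a', b', c') = (a \<noteq> a', b \<noteq> b', c \<noteq> c')"

definition grade :: "blade \<Rightarrow> nat" where
  "grade A = card {i. i < 3 \<and> bmem A i}"

text \<open>Sign from reordering e_A e_B into canonical order.\<close>
definition bsign :: "blade \<Rightarrow> blade \<Rightarrow> real" where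
  "bsign A B = (-1) ^ card {(i, j). i < 3 \<and> j < i \<and> bmem A i \<and> bmem B j}"

text \<open>Metric factor: product of e_i^2 = sig i over the common generators.\<close>
definition bmetric :: "(nat \<Rightarrow> real) \<Rightarrow> blade \<Rightarrow> blade \<Rightarrow> real" where
  "bmetric sig A B = (\<Prod>i\<in>{i. i < 3 \<and> bmem A i \<and> bmem B i}. sig i)"

definition gp :: "(nat \<Rightarrow> real) \<Rightarrow> mv \<Rightarrow> mv \<Rightarrow> mv" where
  "gp sig x y = (\<chi> C. \<Sum>A\<in>UNIV. \<Sum>B\<in>UNIV.
      if bxor A B = C then bsign A B * bmetric sig A B * (x $ A) * (y $ B) else 0)"

definition mv_one :: mv where
  "mv_one = (\<chi> A. if A = (False, False, False) then 1 else 0)"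

definition gradepart :: "nat \<Rightarrow> mv \<Rightarrow> mv" where
  "gradepart k x = (\<chi> A. if grade A = k then x $ A else 0)"

definition evenpart :: "mv \<Rightarrow> mv" where
  "evenpart x = gradepart 0 x + gradepart 2 x"

definition oddpart :: "mv \<Rightarrow> mv" where
  "oddpart x = gradepart 1 x + gradepart 3 x"

definition cliff_conj :: "mv \<Rightarrow> mv" where
  "cliff_conj x = gradepart 0 x - gradepart 1 x - gradepart 2 x + gradepart 3 x"

definition gstar :: "mv \<Rightarrow> mv" where
  "gstar x = 2 *\<^sub>R gradepart 0 x - x"

definition bprod :: "(nat \<Rightarrow> real) \<Rightarrow> mv \<Rightarrow> mv \<Rightarrow> mv" where
  "bprod sig x y =
     gp sig (evenpart x) (evenpart y)
   + gp sig (cliff_conj (oddpart y)) (oddpart x)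
   + gp sig (oddpart y) (evenpart x)
   + gp sig (oddpart x) (cliff_conj (evenpart y))"

text \<open>N(x) defined by x \<bullet> x* = N(x) 1: the scalar coefficient.\<close>
definition Nform :: "(nat \<Rightarrow> real) \<Rightarrow> mv \<Rightarrow> real" where
  "Nform sig x = bprod sig x (gstar x) $ (False, False, False)"

type_synonym quat = "complex \<times> complex"
type_synonym oct = "quat \<times> quat"

fun qmul :: "quat \<Rightarrow> quat \<Rightarrow> quat" where
  "qmul (a, b) (c, d) = (a * c - cnj d * b, d * a + b * cnj c)"

fun qcnj :: "quat \<Rightarrow> quat" where
  "qcnj (a, b) = (cnj a, - b)"

fun qnorm :: "quat \<Rightarrow> real" where
  "qnorm (a, b) = (cmod a)^2 + (cmod b)^2"

text \<open>Cayley--Dickson doubling of the quaternions with parameter mu: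
  (a,b)(c,d) = (ac + mu * conj(d) b, d a + b conj(c)), norm n(a,b) = n(a) - mu n(b).
  mu = -1 gives the octonions, mu = 1 the split-octonions.\<close>
fun cd_mul :: "real \<Rightarrow> oct \<Rightarrow> oct \<Rightarrow> oct" where
  "cd_mul mu (a, b) (c, d) = (qmul a c + mu *\<^sub>R qmul (qcnj d) b, qmul d a + qmul b (qcnj c))"

fun cd_norm :: "real \<Rightarrow> oct \<Rightarrow> real" where
  "cd_norm mu (a, b) = qnorm a - mu * qnorm b"

definition oct_mul :: "oct \<Rightarrow> oct \<Rightarrow> oct" where "oct_mul = cd_mul (-1)"
definition oct_norm :: "oct \<Rightarrow> real" where "oct_norm = cd_norm (-1)"
definition soct_mul :: "oct \<Rightarrow> oct \<Rightarrow> oct" where "soct_mul = cd_mul 1"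
definition soct_norm :: "oct \<Rightarrow> real" where "soct_norm = cd_norm 1"

definition hurwitz_iso ::
  "('a::real_vector \<Rightarrow> 'a \<Rightarrow> 'a) \<Rightarrow> ('a \<Rightarrow> real) \<Rightarrow>
   ('b::real_vector \<Rightarrow> 'b \<Rightarrow> 'b) \<Rightarrow> ('b \<Rightarrow> real) \<Rightarrow> ('a \<Rightarrow> 'b) \<Rightarrow> bool" where
  "hurwitz_iso mulA nA mulB nB f \<longleftrightarrow>
     linear f \<and> bij f \<and> (\<forall>x y. f (mulA x y) = mulB (f x) (f y)) \<and> (\<forall>x. nB (f x) = nA x)"

end

theory Submission
  imports Defs
begin

text \<open>Each signature is matched with a Cayley--Dickson double of the quaternions, with doubling
  parameter \<open>mu\<close>, by a map that sends every basis blade \<open>e\<^sub>A\<close> to \<open>\<plusminus>\<close> one of the eight standard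
  real coordinates.  Such a signed permutation of coordinates is automatically a linear bijection, so
  only multiplicativity and preservation of the norm remain, and these are polynomial identities in
  the coordinates of the factors.  When \<open>e\<^sub>2\<^sup>2 = e\<^sub>3\<^sup>2 = 1\<close> a single table works for both signs
  of \<open>e\<^sub>1\<^sup>2\<close> and gives \<open>mu = -e\<^sub>1\<^sup>2\<close>; each other signature containing a negative square needs its own
  table, again with \<open>mu = 1\<close>.  So only \<open>G(3,0)\<close> yields \<open>mu = -1\<close>, the octonions.\<close>

abbreviation "scalar_blade \<equiv> (False, False, False) :: blade"
abbreviation "e1 \<equiv> (True, False, False) :: blade"
abbreviation "e2 \<equiv> (False, True, False) :: blade"
abbreviation "e3 \<equiv> (False, False, True) :: blade"
abbreviation "e12 \<equiv> (True, True, False) :: blade"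
abbreviation "e13 \<equiv> (True, False, True) :: blade"
abbreviation "e23 \<equiv> (False, True, True) :: blade"
abbreviation "e123 \<equiv> (True, True, True) :: blade"

lemma grade_eq: "grade (a, b, c) = of_bool a + of_bool b + of_bool c"
proof -
  have index_set: "{i. i < 3 \<and> bmem (a, b, c) i} =
      (if a then {0} else {}) \<union> (if b then {1} else {}) \<union> (if c then {2} else {})"
    by (auto simp: less_Suc_eq numeral_3_eq_3 numeral_2_eq_2)
  show ?thesis
    unfolding grade_def index_set by (cases a; cases b; cases c) simp_all
qed

lemma bmetric_eq:
  "bmetric sig (a, b, c) (a', b', c') =
     (if a \<and> a' then sig 0 else 1) * (if b \<and> b' then sig 1 else 1) * (if c \<and> c' then sig 2 else 1)"
proof -
  have index_set: "{i. i < 3 \<and> bmem (a, b, c) i \<and> bmem (a', b', c') i} =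
      (if a \<and> a' then {0} else {}) \<union> (if b \<and> b' then {1} else {}) \<union> (if c \<and> c' then {2} else {})"
    by (auto simp: less_Suc_eq numeral_3_eq_3 numeral_2_eq_2)
  show ?thesis
    unfolding bmetric_def index_set by (cases a; cases b; cases c; cases a'; cases b'; cases c') simp_all
qed

lemma bsign_eq:
  "bsign (a, b, c) (a', b', c') =
     (if b \<and> a' then -1 else 1) * (if c \<and> a' then -1 else 1) * (if c \<and> b' then -1 else 1)"
proof -
  have index_set: "{(i, j). i < 3 \<and> j < i \<and> bmem (a, b, c) i \<and> bmem (a', b', c') j} =
      (if b \<and> a' then {(1, 0)} else {}) \<union> (if c \<and> a' then {(2, 0)} else {}) \<union> (if c \<and> b' then {(2, 1)} else {})"
    by (auto simp: less_Suc_eq numeral_3_eq_3 numeral_2_eq_2)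
  show ?thesis
    unfolding bsign_def index_set by (cases a; cases b; cases c; cases a'; cases b'; cases c') simp_all
qed

lemma UNIV_blade: "(UNIV :: blade set) = {scalar_blade, e1, e2, e3, e12, e13, e23, e123}"
  by auto

lemma sum_UNIV_blade:
  "(\<Sum>A\<in>UNIV. g A) = g scalar_blade + g e1 + g e2 + g e3 + g e12 + g e13 + g e23 + g e123"
  unfolding UNIV_blade by (simp add: add.assoc)

definition oct_coord :: "oct \<Rightarrow> nat \<Rightarrow> real" where
  "oct_coord z k = [Re (fst (fst z)), Im (fst (fst z)), Re (snd (fst z)), Im (snd (fst z)),
                    Re (fst (snd z)), Im (fst (snd z)), Re (snd (snd z)), Im (snd (snd z))] ! k"

definition oct_of_coords :: "(nat \<Rightarrow> real) \<Rightarrow> oct" where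
  "oct_of_coords c = ((Complex (c 0) (c 1), Complex (c 2) (c 3)), (Complex (c 4) (c 5), Complex (c 6) (c 7)))"

lemma oct_of_coords_oct_coord [simp]: "oct_of_coords (oct_coord z) = z"
  by (simp add: oct_of_coords_def oct_coord_def prod_eq_iff complex_eq_iff)

lemma oct_coord_oct_of_coords [simp]:
  assumes "k < 8"
  shows "oct_coord (oct_of_coords c) k = c k"
proof -
  have "k = 0 \<or> k = 1 \<or> k = 2 \<or> k = 3 \<or> k = 4 \<or> k = 5 \<or> k = 6 \<or> k = 7"
    using assms by arith
  then show ?thesis
    by (elim disjE) (simp_all add: oct_coord_def oct_of_coords_def)
qed

lemma oct_of_coords_eq_iff: "oct_of_coords c = oct_of_coords d \<longleftrightarrow> (\<forall>k<8. c k = d k)"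
proof
  assume "oct_of_coords c = oct_of_coords d"
  then show "\<forall>k<8. c k = d k"
    by (metis oct_coord_oct_of_coords)
qed (simp add: oct_of_coords_def)

definition signed_coord_map :: "real list \<Rightarrow> blade list \<Rightarrow> mv \<Rightarrow> oct" where
  "signed_coord_map es bs x = oct_of_coords (\<lambda>k. es ! k * x $ (bs ! k))"

lemma linear_signed_coord_map: "linear (signed_coord_map es bs)"
  by (rule linearI) (simp_all add: signed_coord_map_def oct_of_coords_def complex_eq_iff algebra_simps)

lemma bij_signed_coord_map:
  assumes "distinct bs" "set bs = UNIV" "length es = 8" "0 \<notin> set es"
  shows "bij (signed_coord_map es bs)"
proof -
  have "length bs = 8"
    using distinct_card[OF assms(1)] assms(2) by simp
  then have blades: "bij_betw ((!) bs) {..<8} UNIV"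
    using assms by (intro bij_betw_nth) auto
  have es_nonzero: "es ! k \<noteq> 0" if "k < 8" for k
    using assms(3,4) that by (metis nth_mem)
  define idx where "idx = inv_into {..<8} ((!) bs)"
  have range_bs: "A \<in> (!) bs ` {..<8}" for A
    using blades by (simp add: bij_betw_def)
  have idx: "idx A < 8" "bs ! idx A = A" for A
    unfolding idx_def using inv_into_into[OF range_bs] f_inv_into_f[OF range_bs] by auto
  have idx_nth: "idx (bs ! k) = k" if "k < 8" for k
    using blades that by (simp add: idx_def bij_betw_def inv_into_f_f)
  show ?thesis
  proof (rule bijI)
    show "inj (signed_coord_map es bs)"
    proof (rule injI)
      fix x y
      assume "signed_coord_map es bs x = signed_coord_map es bs y"
      then have "x $ (bs ! k) = y $ (bs ! k)" if "k < 8" for k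
        using that es_nonzero by (auto simp: signed_coord_map_def oct_of_coords_eq_iff)
      then show "x = y"
        by (metis idx vec_eq_iff)
    qed
    show "surj (signed_coord_map es bs)"
    proof (rule surjI)
      fix z
      have "signed_coord_map es bs (\<chi> A. oct_coord z (idx A) / es ! idx A) = oct_of_coords (oct_coord z)"
        unfolding signed_coord_map_def oct_of_coords_eq_iff by (simp add: idx_nth es_nonzero)
      then show "signed_coord_map es bs (\<chi> A. oct_coord z (idx A) / es ! idx A) = z"
        by simp
    qed
  qed
qed

lemma qnorm_Complex: "qnorm (Complex a b, Complex c d) = a * a + b * b + c * c + d * d"
  unfolding qnorm.simps cmod_power2 by (simp add: power2_eq_square)

lemma hurwitz_iso_signed_coord_map:
  assumes "distinct bs" "set bs = UNIV" "length es = 8" "0 \<notin> set es"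
    and "\<And>x y. signed_coord_map es bs (mulA x y) = mulB (signed_coord_map es bs x) (signed_coord_map es bs y)"
    and "\<And>x. nB (signed_coord_map es bs x) = nA x"
  shows "hurwitz_iso mulA nA mulB nB (signed_coord_map es bs)"
  unfolding hurwitz_iso_def
  using linear_signed_coord_map bij_signed_coord_map[OF assms(1-4)] assms(5,6) by blast

lemmas clifford_coord_simps = signed_coord_map_def oct_of_coords_def Nform_def bprod_def gp_def
  sum_UNIV_blade bsign_eq bmetric_eq grade_eq evenpart_def oddpart_def cliff_conj_def gradepart_def
  gstar_def complex_eq_iff qnorm_Complex UNIV_blade insert_commute

text \<open>The hypotheses mention \<open>sig (Suc 0)\<close> because that is the form \<open>e\<^sub>2\<^sup>2\<close> takes once the
  products are expanded by the simplifier.\<close>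

lemma bprod_iso_cayley_dickson:
  assumes "sig 0 = - mu" "sig (Suc 0) = 1" "sig 2 = 1"
  shows "hurwitz_iso (bprod sig) (Nform sig) (cd_mul mu) (cd_norm mu)
    (signed_coord_map [1, 1, 1, -1, 1, -1, -1, -1] [scalar_blade, e3, e2, e23, e1, e13, e12, e123])"
  by (rule hurwitz_iso_signed_coord_map)
    ((simp_all add: clifford_coord_simps assms del: qnorm.simps), (simp_all add: algebra_simps))

lemma bprod_iso_split_octonions_ppm:
  assumes "sig 0 = 1" "sig (Suc 0) = 1" "sig 2 = -1"
  shows "hurwitz_iso (bprod sig) (Nform sig) (cd_mul 1) (cd_norm 1)
    (signed_coord_map [1, 1, 1, -1, 1, 1, 1, -1] [scalar_blade, e2, e1, e12, e3, e23, e13, e123])"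
  by (rule hurwitz_iso_signed_coord_map) (simp_all add: clifford_coord_simps assms del: qnorm.simps)

lemma bprod_iso_split_octonions_pmp:
  assumes "sig 0 = 1" "sig (Suc 0) = -1" "sig 2 = 1"
  shows "hurwitz_iso (bprod sig) (Nform sig) (cd_mul 1) (cd_norm 1)
    (signed_coord_map [1, 1, 1, -1, 1, -1, 1, 1] [scalar_blade, e3, e1, e13, e2, e23, e12, e123])"
  by (rule hurwitz_iso_signed_coord_map) (simp_all add: clifford_coord_simps assms del: qnorm.simps)

lemma bprod_iso_split_octonions_pmm:
  assumes "sig 0 = 1" "sig (Suc 0) = -1" "sig 2 = -1"
  shows "hurwitz_iso (bprod sig) (Nform sig) (cd_mul 1) (cd_norm 1)
    (signed_coord_map [1, 1, 1, 1, 1, 1, 1, 1] [scalar_blade, e23, e1, e123, e3, e2, e13, e12])"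
  by (rule hurwitz_iso_signed_coord_map) (simp_all add: clifford_coord_simps assms del: qnorm.simps)

lemma bprod_iso_split_octonions_mpm:
  assumes "sig 0 = -1" "sig (Suc 0) = 1" "sig 2 = -1"
  shows "hurwitz_iso (bprod sig) (Nform sig) (cd_mul 1) (cd_norm 1)
    (signed_coord_map [1, 1, 1, 1, 1, 1, 1, 1] [scalar_blade, e2, e13, e123, e3, e23, e1, e12])"
  by (rule hurwitz_iso_signed_coord_map) (simp_all add: clifford_coord_simps assms del: qnorm.simps)

lemma bprod_iso_split_octonions_mmp:
  assumes "sig 0 = -1" "sig (Suc 0) = -1" "sig 2 = 1"
  shows "hurwitz_iso (bprod sig) (Nform sig) (cd_mul 1) (cd_norm 1)
    (signed_coord_map [1, 1, 1, -1, 1, -1, 1, 1] [scalar_blade, e3, e12, e123, e2, e23, e1, e13])"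
  by (rule hurwitz_iso_signed_coord_map) (simp_all add: clifford_coord_simps assms del: qnorm.simps)

lemma bprod_iso_split_octonions_mmm:
  assumes "sig 0 = -1" "sig (Suc 0) = -1" "sig 2 = -1"
  shows "hurwitz_iso (bprod sig) (Nform sig) (cd_mul 1) (cd_norm 1)
    (signed_coord_map [1, 1, 1, -1, 1, 1, 1, -1] [scalar_blade, e23, e13, e12, e3, e2, e1, e123])"
  by (rule hurwitz_iso_signed_coord_map) (simp_all add: clifford_coord_simps assms del: qnorm.simps)

lemma all_less_three_iff: "(\<forall>i<3. P i) \<longleftrightarrow> P 0 \<and> P (Suc 0) \<and> P 2"
proof
  assume P: "P 0 \<and> P (Suc 0) \<and> P 2"
  show "\<forall>i<3. P i"
  proof (intro allI impI)
    fix i :: nat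
    assume "i < 3"
    then have "i = 0 \<or> i = Suc 0 \<or> i = 2"
      by arith
    with P show "P i"
      by auto
  qed
qed simp

lemma card_less_three_eq_three_iff: "card {i::nat. i < 3 \<and> P i} = 3 \<longleftrightarrow> (\<forall>i<3. P i)"
proof
  assume "card {i. i < 3 \<and> P i} = 3"
  then have "{i. i < 3 \<and> P i} = {..<3}"
    by (intro card_subset_eq) auto
  then show "\<forall>i<3. P i"
    by blast
next
  assume "\<forall>i<3. P i"
  then have "{i. i < 3 \<and> P i} = {..<3}"
    by blast
  then show "card {i. i < 3 \<and> P i} = 3"
    by simp
qed

lemma bprod_iso_split_octonions:
  assumes "\<forall>i<3. sig i = 1 \<or> sig i = -1" and "\<not> (\<forall>i<3. sig i = 1)"
  shows "\<exists>f. hurwitz_iso (bprod sig) (Nform sig) soct_mul soct_norm f"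
proof -
  from assms have "sig 0 = 1 \<or> sig 0 = -1" "sig (Suc 0) = 1 \<or> sig (Suc 0) = -1" "sig 2 = 1 \<or> sig 2 = -1"
    and "\<not> (sig 0 = 1 \<and> sig (Suc 0) = 1 \<and> sig 2 = 1)"
    by (simp_all add: all_less_three_iff)
  then show ?thesis
    unfolding soct_mul_def soct_norm_def
    using bprod_iso_cayley_dickson[of sig 1] bprod_iso_split_octonions_ppm[of sig]
      bprod_iso_split_octonions_pmp[of sig] bprod_iso_split_octonions_pmm[of sig]
      bprod_iso_split_octonions_mpm[of sig] bprod_iso_split_octonions_mmp[of sig]
      bprod_iso_split_octonions_mmm[of sig]
    by blast
qed

theorem mainTheorem5:
  fixes sig :: "nat \<Rightarrow> real" and p q :: nat
  assumes "\<forall>i<3. sig i = 1 \<or> sig i = -1"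
    and "p = card {i. i < 3 \<and> sig i = 1}"
    and "q = card {i. i < 3 \<and> sig i = -1}"
  shows "((p, q) = (3, 0) \<longrightarrow>
            (\<exists>f. hurwitz_iso (bprod sig) (Nform sig) oct_mul oct_norm f))
       \<and> ((p, q) \<in> {(2, 1), (1, 2), (0, 3)} \<longrightarrow>
            (\<exists>f. hurwitz_iso (bprod sig) (Nform sig) soct_mul soct_norm f))"
proof -
  have euclidean_iff: "p = 3 \<longleftrightarrow> (\<forall>i<3. sig i = 1)"
    unfolding assms(2) by (rule card_less_three_eq_three_iff)
  show ?thesis
  proof (intro conjI impI)
    assume "(p, q) = (3, 0)"
    then have sig_pos: "sig 0 = 1" "sig (Suc 0) = 1" "sig 2 = 1"
      using euclidean_iff by (simp_all add: all_less_three_iff)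
    show "\<exists>f. hurwitz_iso (bprod sig) (Nform sig) oct_mul oct_norm f"
      unfolding oct_mul_def oct_norm_def by (rule exI, rule bprod_iso_cayley_dickson) (simp_all add: sig_pos)
  next
    assume "(p, q) \<in> {(2, 1), (1, 2), (0, 3)}"
    then have "\<not> (\<forall>i<3. sig i = 1)"
      using euclidean_iff by auto
    then show "\<exists>f. hurwitz_iso (bprod sig) (Nform sig) soct_mul soct_norm f"
      by (rule bprod_iso_split_octonions[OF assms(1)])
  qed
qed

end
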